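(* There are strictly more first-order-expressible node properties expressible in $\mathsf{inf}\text{-}\mathrm{C}^2$ than properties expressible in $\mathrm{C}^2$: every property expressible in $\mathrm{C}^2$ is expressible both in first-order logic and in $\mathsf{inf}\text{-}\mathrm{C}^2$, but there is a property expressible both in first-order logic and in $\mathsf{inf}\text{-}\mathrm{C}^2$ that is not expressible in $\mathrm{C}^2$. This holds both over directed graphs and over undirected graphs.
   Context: A directed graph of dimension $d$ is $G=(V,E,\lambda)$ with $V$ finite, $E\subseteq V\times V$ without loops, $\lambda:V\to\{0,1\}^d$, viewed as a first-order structure with relation $E$ and unary predicates $P_i=\{v:\lambda(v)_i=1\}$; undirected graphs are those with symmetric $E$. A (node) property assigns a truth value to each node of each graph and is expressible in a logic if some formula $\varphi(x)$ of that logic with one free variable satisfies: $G\models\varphi(v)$ iff the property holds at $v$ in $G$, for all graphs $G$ (of the class considered) and nodes $v$. $\mathrm{C}^2$ is the fragment of first-order logic with equality using only the two variables $x,y$ but allowing counting quantifiers $\exists_k$ for every $k\in\mathbb{N}$ ("there exist at least $k$ distinct elements such that"). $\mathsf{inf}\text{-}\mathrm{C}^2$ is the extension of $\mathrm{C}^2$ allowing infinitary conjunctions and disjunctions (still using only the variables $x,y$). *)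

theory Defs
  imports Main
begin

section \<open>Labelled graphs (vertices drawn from nat, which covers all finite graphs up to isomorphism)\<close>

record graph =
  verts :: "nat set"
  arcs  :: "(nat \<times> nat) set"
  lab   :: "nat \<Rightarrow> bool list"

definition is_graph :: "nat \<Rightarrow> graph \<Rightarrow> bool" where
  "is_graph d G \<longleftrightarrow> finite (verts G) \<and> arcs G \<subseteq> verts G \<times> verts G
     \<and> (\<forall>v. (v, v) \<notin> arcs G) \<and> (\<forall>v\<in>verts G. length (lab G v) = d)"

definition is_ugraph :: "nat \<Rightarrow> graph \<Rightarrow> bool" where
  "is_ugraph d G \<longleftrightarrow> is_graph d G \<and> sym (arcs G)"

text \<open>Unary predicate P_i (0-based index i): the i-th label bit is 1.\<close>
definition hasP :: "graph \<Rightarrow> nat \<Rightarrow> nat \<Rightarrow> bool" where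
  "hasP G i v \<longleftrightarrow> i < length (lab G v) \<and> lab G v ! i"

datatype fo = FEq nat nat | FEdge nat nat | FPred nat nat | FNeg fo | FAnd fo fo | FEx nat fo

primrec fo_fv :: "fo \<Rightarrow> nat set" where
  "fo_fv (FEq i j) = {i, j}"
| "fo_fv (FEdge i j) = {i, j}"
| "fo_fv (FPred k i) = {i}"
| "fo_fv (FNeg \<phi>) = fo_fv \<phi>"
| "fo_fv (FAnd \<phi> \<psi>) = fo_fv \<phi> \<union> fo_fv \<psi>"
| "fo_fv (FEx i \<phi>) = fo_fv \<phi> - {i}"

primrec fo_sat :: "graph \<Rightarrow> (nat \<Rightarrow> nat) \<Rightarrow> fo \<Rightarrow> bool" where
  "fo_sat G a (FEq i j) = (a i = a j)"
| "fo_sat G a (FEdge i j) = ((a i, a j) \<in> arcs G)"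
| "fo_sat G a (FPred k i) = hasP G k (a i)"
| "fo_sat G a (FNeg \<phi>) = (\<not> fo_sat G a \<phi>)"
| "fo_sat G a (FAnd \<phi> \<psi>) = (fo_sat G a \<phi> \<and> fo_sat G a \<psi>)"
| "fo_sat G a (FEx i \<phi>) = (\<exists>w\<in>verts G. fo_sat G (a(i := w)) \<phi>)"

datatype var2 = VX | VY

datatype c2 = CEq var2 var2 | CEdge var2 var2 | CPred nat var2 | CNeg c2 | CAnd c2 c2
  | CExc nat var2 c2

primrec c2_fv :: "c2 \<Rightarrow> var2 set" where
  "c2_fv (CEq z w) = {z, w}"
| "c2_fv (CEdge z w) = {z, w}"
| "c2_fv (CPred k z) = {z}"
| "c2_fv (CNeg \<phi>) = c2_fv \<phi>"
| "c2_fv (CAnd \<phi> \<psi>) = c2_fv \<phi> \<union> c2_fv \<psi>"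
| "c2_fv (CExc k z \<phi>) = c2_fv \<phi> - {z}"

primrec c2_sat :: "graph \<Rightarrow> (var2 \<Rightarrow> nat) \<Rightarrow> c2 \<Rightarrow> bool" where
  "c2_sat G a (CEq z w) = (a z = a w)"
| "c2_sat G a (CEdge z w) = ((a z, a w) \<in> arcs G)"
| "c2_sat G a (CPred k z) = hasP G k (a z)"
| "c2_sat G a (CNeg \<phi>) = (\<not> c2_sat G a \<phi>)"
| "c2_sat G a (CAnd \<phi> \<psi>) = (c2_sat G a \<phi> \<and> c2_sat G a \<psi>)"
| "c2_sat G a (CExc k z \<phi>) = (k \<le> card {w \<in> verts G. c2_sat G (a(z := w)) \<phi>})"

datatype ic2 = IEq var2 var2 | IEdge var2 var2 | IPred nat var2 | INeg ic2 | IAnd ic2 ic2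
  | IBigAnd "nat \<Rightarrow> ic2" | IBigOr "nat \<Rightarrow> ic2"
  | IExc nat var2 ic2

primrec ic2_fv :: "ic2 \<Rightarrow> var2 set" where
  "ic2_fv (IEq z w) = {z, w}"
| "ic2_fv (IEdge z w) = {z, w}"
| "ic2_fv (IPred k z) = {z}"
| "ic2_fv (INeg \<phi>) = ic2_fv \<phi>"
| "ic2_fv (IAnd \<phi> \<psi>) = ic2_fv \<phi> \<union> ic2_fv \<psi>"
| "ic2_fv (IBigAnd f) = (\<Union>i. ic2_fv (f i))"
| "ic2_fv (IBigOr f) = (\<Union>i. ic2_fv (f i))"
| "ic2_fv (IExc k z \<phi>) = ic2_fv \<phi> - {z}"

primrec ic2_sat :: "graph \<Rightarrow> (var2 \<Rightarrow> nat) \<Rightarrow> ic2 \<Rightarrow> bool" where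
  "ic2_sat G a (IEq z w) = (a z = a w)"
| "ic2_sat G a (IEdge z w) = ((a z, a w) \<in> arcs G)"
| "ic2_sat G a (IPred k z) = hasP G k (a z)"
| "ic2_sat G a (INeg \<phi>) = (\<not> ic2_sat G a \<phi>)"
| "ic2_sat G a (IAnd \<phi> \<psi>) = (ic2_sat G a \<phi> \<and> ic2_sat G a \<psi>)"
| "ic2_sat G a (IBigAnd f) = (\<forall>i. ic2_sat G a (f i))"
| "ic2_sat G a (IBigOr f) = (\<exists>i. ic2_sat G a (f i))"
| "ic2_sat G a (IExc k z \<phi>) = (k \<le> card {w \<in> verts G. ic2_sat G (a(z := w)) \<phi>})"

text \<open>A node property is a function P :: graph => nat => bool (only its values at
  nodes v of graphs G in the class matter).
  The assignment maps every variable to v; only x is free, so this is G |= phi(v).\<close>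

definition fo_expressible :: "(graph \<Rightarrow> bool) \<Rightarrow> (graph \<Rightarrow> nat \<Rightarrow> bool) \<Rightarrow> bool" where
  "fo_expressible C P \<longleftrightarrow> (\<exists>\<phi>. fo_fv \<phi> \<subseteq> {0} \<and>
     (\<forall>G v. C G \<and> v \<in> verts G \<longrightarrow> (fo_sat G (\<lambda>_. v) \<phi> \<longleftrightarrow> P G v)))"

definition c2_expressible :: "(graph \<Rightarrow> bool) \<Rightarrow> (graph \<Rightarrow> nat \<Rightarrow> bool) \<Rightarrow> bool" where
  "c2_expressible C P \<longleftrightarrow> (\<exists>\<phi>. c2_fv \<phi> \<subseteq> {VX} \<and>
     (\<forall>G v. C G \<and> v \<in> verts G \<longrightarrow> (c2_sat G (\<lambda>_. v) \<phi> \<longleftrightarrow> P G v)))"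

definition ic2_expressible :: "(graph \<Rightarrow> bool) \<Rightarrow> (graph \<Rightarrow> nat \<Rightarrow> bool) \<Rightarrow> bool" where
  "ic2_expressible C P \<longleftrightarrow> (\<exists>\<phi>. ic2_fv \<phi> \<subseteq> {VX} \<and>
     (\<forall>G v. C G \<and> v \<in> verts G \<longrightarrow> (ic2_sat G (\<lambda>_. v) \<phi> \<longleftrightarrow> P G v)))"

end

theory Submission
  imports Defs
begin

text \<open>
  A two-variable counting formula is an infinitary one as it stands, and it becomes a
  first-order formula once every counting quantifier ``at least \<open>k\<close>'' is spelled out
  with \<open>k\<close> fresh, pairwise distinct witness variables.

  The separating property says that the graph is symmetric and that any two
  neighbourhoods \<open>N(u) - {w}\<close> and \<open>N(w) - {u}\<close> are comparable.
  On finite graphs it holds iff every vertex \<open>x\<close> selects its neighbours among the other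
  vertices by a degree threshold \<open>k\<close>; for fixed \<open>k\<close> this is a two-variable counting
  condition on \<open>x\<close>, and the disjunction over all \<open>k\<close> is infinitary.

  No finitary two-variable counting formula expresses it: take \<open>N\<close> twins of each
  position \<open>0, \<dots>, 4R + 7\<close> and join two vertices iff the smaller of their positions is
  even. This is a threshold graph, so its neighbourhoods are nested, and deleting the
  edges between the positions \<open>2R + 2\<close> and \<open>2R + 5\<close> destroys nestedness. A formula of
  quantifier rank \<open>R\<close> sees of a position only its parity and its distances to both ends
  up to \<open>2R\<close>; far from the ends either adjacency to a given position can be imitated, and
  the \<open>N\<close> twins hide the remaining differences from all counting thresholds below \<open>N\<close>.
\<close>

section \<open>Translating two-variable counting logic\<close>

primrec ic2_of_c2 :: "c2 \<Rightarrow> ic2" where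
  "ic2_of_c2 (CEq z w) = IEq z w"
| "ic2_of_c2 (CEdge z w) = IEdge z w"
| "ic2_of_c2 (CPred k z) = IPred k z"
| "ic2_of_c2 (CNeg \<phi>) = INeg (ic2_of_c2 \<phi>)"
| "ic2_of_c2 (CAnd \<phi> \<psi>) = IAnd (ic2_of_c2 \<phi>) (ic2_of_c2 \<psi>)"
| "ic2_of_c2 (CExc k z \<phi>) = IExc k z (ic2_of_c2 \<phi>)"

lemma ic2_fv_ic2_of_c2 [simp]: "ic2_fv (ic2_of_c2 \<phi>) = c2_fv \<phi>"
  by (induction \<phi>) auto

lemma ic2_sat_ic2_of_c2 [simp]: "ic2_sat G a (ic2_of_c2 \<phi>) = c2_sat G a \<phi>"
  by (induction \<phi> arbitrary: a) auto

lemma c2_expressible_imp_ic2_expressible: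
  "c2_expressible C P \<Longrightarrow> ic2_expressible C P"
  unfolding c2_expressible_def ic2_expressible_def
  by (metis ic2_fv_ic2_of_c2 ic2_sat_ic2_of_c2)

definition FTrue :: fo where "FTrue = FEq 0 0"  \<comment> \<open>hence the variable \<open>0\<close> in the bounds on free variables below\<close>
definition FAll :: "nat \<Rightarrow> fo \<Rightarrow> fo" where "FAll i \<phi> = FNeg (FEx i (FNeg \<phi>))"
definition FImp :: "fo \<Rightarrow> fo \<Rightarrow> fo" where "FImp \<phi> \<psi> = FNeg (FAnd \<phi> (FNeg \<psi>))"
definition FOr :: "fo \<Rightarrow> fo \<Rightarrow> fo" where "FOr \<phi> \<psi> = FNeg (FAnd (FNeg \<phi>) (FNeg \<psi>))"

lemma fo_sat_FTrue [simp]: "fo_sat G a FTrue"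
  and fo_sat_FAll [simp]: "fo_sat G a (FAll i \<phi>) \<longleftrightarrow> (\<forall>w\<in>verts G. fo_sat G (a(i := w)) \<phi>)"
  and fo_sat_FImp [simp]: "fo_sat G a (FImp \<phi> \<psi>) \<longleftrightarrow> (fo_sat G a \<phi> \<longrightarrow> fo_sat G a \<psi>)"
  and fo_sat_FOr [simp]: "fo_sat G a (FOr \<phi> \<psi>) \<longleftrightarrow> (fo_sat G a \<phi> \<or> fo_sat G a \<psi>)"
  by (simp_all add: FTrue_def FAll_def FImp_def FOr_def)

lemma fo_fv_FTrue [simp]: "fo_fv FTrue = {0}"
  and fo_fv_FAll [simp]: "fo_fv (FAll i \<phi>) = fo_fv \<phi> - {i}"
  and fo_fv_FImp [simp]: "fo_fv (FImp \<phi> \<psi>) = fo_fv \<phi> \<union> fo_fv \<psi>"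
  and fo_fv_FOr [simp]: "fo_fv (FOr \<phi> \<psi>) = fo_fv \<phi> \<union> fo_fv \<psi>"
  by (simp_all add: FTrue_def FAll_def FImp_def FOr_def)

definition fo_distinct_from :: "nat \<Rightarrow> nat list \<Rightarrow> fo" where
  "fo_distinct_from j is = foldr (\<lambda>i \<phi>. FAnd (FNeg (FEq j i)) \<phi>) is FTrue"

lemma fo_sat_fo_distinct_from [simp]:
  "fo_sat G a (fo_distinct_from j is) \<longleftrightarrow> a j \<notin> a ` set is"
  by (induction "is") (auto simp: fo_distinct_from_def)

lemma fo_fv_fo_distinct_from: "fo_fv (fo_distinct_from j is) \<subseteq> {0, j} \<union> set is"
  by (induction "is") (auto simp: fo_distinct_from_def)

text \<open>\<open>fo_at_least \<psi> n m j\<close> binds the variables \<open>j, \<dots>, j + m - 1\<close> to values that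
  satisfy \<open>\<psi>\<close> and differ from each other and from the values of \<open>n, \<dots>, j - 1\<close>;
  with \<open>j = n\<close> it says that at least \<open>m\<close> values satisfy \<open>\<psi>\<close>.\<close>

fun fo_at_least :: "(nat \<Rightarrow> fo) \<Rightarrow> nat \<Rightarrow> nat \<Rightarrow> nat \<Rightarrow> fo" where
  "fo_at_least \<psi> n 0 j = FTrue"
| "fo_at_least \<psi> n (Suc m) j =
     FEx j (FAnd (fo_distinct_from j [n..<j]) (FAnd (\<psi> j) (fo_at_least \<psi> n m (Suc j))))"

lemma fo_fv_fo_at_least:
  "fo_fv (fo_at_least \<psi> n m j) \<subseteq> {0} \<union> {n..<j} \<union> (\<Union>i\<in>{j..<j + m}. fo_fv (\<psi> i) - {i})"
proof (induction m arbitrary: j)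
  case (Suc m)
  have "fo_fv (fo_distinct_from j [n..<j]) - {j} \<subseteq> {0} \<union> {n..<j}"
    using fo_fv_fo_distinct_from[of j "[n..<j]"] by auto
  moreover have "fo_fv (fo_at_least \<psi> n m (Suc j)) - {j}
      \<subseteq> {0} \<union> {n..<j} \<union> (\<Union>i\<in>{j..<j + Suc m}. fo_fv (\<psi> i) - {i})"
    using Suc[of "Suc j"] by (auto simp: less_Suc_eq)
  ultimately show ?case by auto
qed simp

lemma ex_card_Diff_singleton_iff:
  assumes "finite T"
  shows "(\<exists>w\<in>T. m \<le> card (T - {w})) \<longleftrightarrow> Suc m \<le> card T"
proof -
  have "(\<exists>w\<in>T. m \<le> card (T - {w})) \<longleftrightarrow> T \<noteq> {} \<and> m \<le> card T - 1"
    using assms by (auto simp: card_Diff_singleton)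
  also have "\<dots> \<longleftrightarrow> Suc m \<le> card T"
    using assms card_gt_0_iff[of T] by linarith
  finally show ?thesis .
qed

lemma fo_sat_fo_at_least:
  assumes fin: "finite (verts G)"
    and \<psi>: "\<And>b' j. \<forall>i<n. b' i = b i \<Longrightarrow> n \<le> j \<Longrightarrow> j < n + k \<Longrightarrow> fo_sat G b' (\<psi> j) \<longleftrightarrow> Q (b' j)"
  shows "\<forall>i<n. b' i = b i \<Longrightarrow> n \<le> j \<Longrightarrow> j + m \<le> n + k \<Longrightarrow>
    fo_sat G b' (fo_at_least \<psi> n m j) \<longleftrightarrow> m \<le> card ({w \<in> verts G. Q w} - b' ` {n..<j})"
proof (induction m arbitrary: j b')
  case (Suc m)
  let ?S = "{w \<in> verts G. Q w}"
  have img: "(b'(j := w)) ` {n..<Suc j} = insert w (b' ` {n..<j})" for w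
    using Suc.prems(2) by (auto simp: fun_upd_image atLeastLessThanSuc)
  have "fo_sat G (b'(j := w)) (\<psi> j) \<longleftrightarrow> Q w" for w
    using Suc.prems \<psi>[of "b'(j := w)" j] by simp
  moreover have "fo_sat G (b'(j := w)) (fo_at_least \<psi> n m (Suc j))
      \<longleftrightarrow> m \<le> card (?S - insert w (b' ` {n..<j}))" for w
  proof -
    have "\<forall>i<n. (b'(j := w)) i = b i" "n \<le> Suc j" "Suc j + m \<le> n + k"
      using Suc.prems by auto
    from Suc.IH[OF this] show ?thesis by (simp only: img)
  qed
  moreover have "(b'(j := w)) j \<notin> (b'(j := w)) ` set [n..<j] \<longleftrightarrow> w \<notin> b' ` {n..<j}" for w
    by (simp add: fun_upd_image)
  ultimately have "fo_sat G b' (fo_at_least \<psi> n (Suc m) j) \<longleftrightarrow>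
      (\<exists>w\<in>verts G. w \<notin> b' ` {n..<j} \<and> Q w \<and> m \<le> card (?S - insert w (b' ` {n..<j})))"
    by simp
  also have "\<dots> \<longleftrightarrow> (\<exists>w\<in>?S - b' ` {n..<j}. m \<le> card (?S - b' ` {n..<j} - {w}))"
    by (auto simp: Diff_insert2 [symmetric] insert_commute)
  also have "\<dots> \<longleftrightarrow> Suc m \<le> card (?S - b' ` {n..<j})"
    using fin by (intro ex_card_Diff_singleton_iff) simp
  finally show ?case .
qed simp

text \<open>The two variables \<open>VX, VY\<close> are mapped to first-order variables by \<open>\<rho>\<close>; all variables
  from \<open>n\<close> on are fresh and host the witnesses of the counting quantifiers.\<close>

primrec fo_of_c2 :: "(var2 \<Rightarrow> nat) \<Rightarrow> nat \<Rightarrow> c2 \<Rightarrow> fo" where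
  "fo_of_c2 \<rho> n (CEq z w) = FEq (\<rho> z) (\<rho> w)"
| "fo_of_c2 \<rho> n (CEdge z w) = FEdge (\<rho> z) (\<rho> w)"
| "fo_of_c2 \<rho> n (CPred k z) = FPred k (\<rho> z)"
| "fo_of_c2 \<rho> n (CNeg \<phi>) = FNeg (fo_of_c2 \<rho> n \<phi>)"
| "fo_of_c2 \<rho> n (CAnd \<phi> \<psi>) = FAnd (fo_of_c2 \<rho> n \<phi>) (fo_of_c2 \<rho> n \<psi>)"
| "fo_of_c2 \<rho> n (CExc k z \<phi>) = fo_at_least (\<lambda>j. fo_of_c2 (\<rho>(z := j)) (n + k) \<phi>) n k n"

lemma fo_fv_fo_of_c2: "fo_fv (fo_of_c2 \<rho> n \<phi>) \<subseteq> \<rho> ` c2_fv \<phi> \<union> {0}"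
proof (induction \<phi> arbitrary: \<rho> n)
  case (CExc k z \<phi>)
  have "(\<rho>(z := i)) ` c2_fv \<phi> \<subseteq> insert i (\<rho> ` (c2_fv \<phi> - {z}))" for i
    by auto
  then have "fo_fv (fo_of_c2 (\<rho>(z := i)) (n + k) \<phi>) - {i} \<subseteq> \<rho> ` (c2_fv \<phi> - {z}) \<union> {0}" for i
    using CExc[of "\<rho>(z := i)" "n + k"] by blast
  moreover have "fo_fv (fo_at_least (\<lambda>j. fo_of_c2 (\<rho>(z := j)) (n + k) \<phi>) n k n)
      \<subseteq> {0} \<union> (\<Union>i\<in>{n..<n + k}. fo_fv (fo_of_c2 (\<rho>(z := i)) (n + k) \<phi>) - {i})"
    using fo_fv_fo_at_least[of "\<lambda>j. fo_of_c2 (\<rho>(z := j)) (n + k) \<phi>" n k n] by simp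
  ultimately show ?case
    by (simp only: fo_of_c2.simps c2_fv.simps) blast
qed (simp; blast)+

lemma fo_sat_fo_of_c2:
  assumes "finite (verts G)"
  shows "\<forall>z. \<rho> z < n \<Longrightarrow> fo_sat G b (fo_of_c2 \<rho> n \<phi>) \<longleftrightarrow> c2_sat G (b \<circ> \<rho>) \<phi>"
proof (induction \<phi> arbitrary: \<rho> n b)
  case (CExc k z \<phi>)
  let ?\<psi> = "\<lambda>j. fo_of_c2 (\<rho>(z := j)) (n + k) \<phi>" and ?Q = "\<lambda>w. c2_sat G ((b \<circ> \<rho>)(z := w)) \<phi>"
  have witness: "fo_sat G b' (?\<psi> j) \<longleftrightarrow> ?Q (b' j)"
    if "\<forall>i<n. b' i = b i" "n \<le> j" "j < n + k" for b' j
  proof -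
    have "b' \<circ> \<rho>(z := j) = (b \<circ> \<rho>)(z := b' j)"
      using that CExc.prems by (auto simp: fun_eq_iff)
    moreover have "\<forall>z'. (\<rho>(z := j)) z' < n + k"
      using that CExc.prems by (auto simp: less_imp_le_nat trans_less_add1)
    ultimately show ?thesis using CExc.IH by metis
  qed
  have "fo_sat G b (fo_at_least ?\<psi> n k n) \<longleftrightarrow> k \<le> card ({w \<in> verts G. ?Q w} - b ` {n..<n})"
    by (rule fo_sat_fo_at_least[where \<psi> = ?\<psi> and Q = ?Q and b = b and k = k, OF assms witness]) simp_all
  then show ?case by (simp add: comp_def)
qed auto

lemma c2_expressible_imp_fo_expressible:
  assumes "\<And>G. C G \<Longrightarrow> finite (verts G)" and "c2_expressible C P"
  shows "fo_expressible C P"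
proof -
  obtain \<phi> where fv: "c2_fv \<phi> \<subseteq> {VX}"
    and sem: "\<forall>G v. C G \<and> v \<in> verts G \<longrightarrow> (c2_sat G (\<lambda>_. v) \<phi> \<longleftrightarrow> P G v)"
    using assms(2) unfolding c2_expressible_def by blast
  define \<rho> where "\<rho> = (\<lambda>z. if z = VX then 0 else Suc 0)"
  have "fo_fv (fo_of_c2 \<rho> 2 \<phi>) \<subseteq> {0}"
    using fo_fv_fo_of_c2[of \<rho> 2 \<phi>] fv by (auto simp: \<rho>_def)
  moreover have "fo_sat G (\<lambda>_. v) (fo_of_c2 \<rho> 2 \<phi>) \<longleftrightarrow> c2_sat G (\<lambda>_. v) \<phi>" if "C G" for G v
    using fo_sat_fo_of_c2[OF assms(1)[OF that], of \<rho> 2 "\<lambda>_. v"] by (simp add: \<rho>_def comp_def)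
  ultimately show ?thesis
    using sem unfolding fo_expressible_def by blast
qed

section \<open>Nested neighbourhoods\<close>

definition nbhd :: "graph \<Rightarrow> nat \<Rightarrow> nat set" where
  "nbhd G u = {t \<in> verts G. (u, t) \<in> arcs G}"

definition deg :: "graph \<Rightarrow> nat \<Rightarrow> nat" where
  "deg G u = card (nbhd G u)"

definition nested_nbhds :: "graph \<Rightarrow> bool" where
  "nested_nbhds G \<longleftrightarrow> sym (arcs G) \<and>
     (\<forall>u\<in>verts G. \<forall>w\<in>verts G. nbhd G u - {w} \<subseteq> nbhd G w \<or> nbhd G w - {u} \<subseteq> nbhd G u)"

lemma nbhd_Diff_subset_iff:
  "nbhd G u - {w} \<subseteq> nbhd G w \<longleftrightarrow> (\<forall>t\<in>verts G. (u, t) \<in> arcs G \<and> t \<noteq> w \<longrightarrow> (w, t) \<in> arcs G)"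
  by (auto simp: nbhd_def)

lemma sym_arcs_iff:
  "is_graph d G \<Longrightarrow> sym (arcs G) \<longleftrightarrow> (\<forall>u\<in>verts G. \<forall>w\<in>verts G. (u, w) \<in> arcs G \<longrightarrow> (w, u) \<in> arcs G)"
  unfolding is_graph_def sym_def by blast

definition fo_nbhd_below :: "nat \<Rightarrow> nat \<Rightarrow> fo" where
  "fo_nbhd_below u w = FAll 3 (FImp (FAnd (FEdge u 3) (FNeg (FEq 3 w))) (FEdge w 3))"

definition fo_nested :: fo where
  "fo_nested = FAnd (FAll 1 (FAll 2 (FImp (FEdge 1 2) (FEdge 2 1))))
     (FAll 1 (FAll 2 (FOr (fo_nbhd_below 1 2) (fo_nbhd_below 2 1))))"

lemma fo_fv_fo_nested: "fo_fv fo_nested = {}"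
  by (auto simp: fo_nested_def fo_nbhd_below_def)

lemma fo_sat_fo_nested: "is_graph d G \<Longrightarrow> fo_sat G a fo_nested \<longleftrightarrow> nested_nbhds G"
  by (simp add: fo_nested_def fo_nbhd_below_def nested_nbhds_def sym_arcs_iff nbhd_Diff_subset_iff)

lemma fo_expressible_nested_nbhds:
  assumes "\<And>G. C G \<Longrightarrow> is_graph d G"
  shows "fo_expressible C (\<lambda>G v. nested_nbhds G)"
  unfolding fo_expressible_def using assms fo_fv_fo_nested fo_sat_fo_nested by blast

definition degree_threshold :: "graph \<Rightarrow> nat \<Rightarrow> nat \<Rightarrow> bool" where
  "degree_threshold G x k \<longleftrightarrow> (\<forall>y\<in>verts G. x \<noteq> y \<longrightarrow> ((x, y) \<in> arcs G \<longleftrightarrow> k \<le> deg G y))"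

lemma nested_if_degree_thresholds:
  assumes "is_graph d G" "sym (arcs G)" "\<forall>x\<in>verts G. \<exists>k. degree_threshold G x k"
  shows "nested_nbhds G"
proof -
  have "nbhd G u - {w} \<subseteq> nbhd G w"
    if "degree_threshold G u ku" "degree_threshold G w kw" "kw \<le> ku" for u w ku kw
  proof
    fix t assume t: "t \<in> nbhd G u - {w}"
    then have "t \<noteq> u" using assms(1) by (auto simp: is_graph_def nbhd_def)
    then show "t \<in> nbhd G w"
      using t that by (auto simp: degree_threshold_def nbhd_def)
  qed
  then show ?thesis
    using assms(2,3) unfolding nested_nbhds_def by (metis nat_le_linear)
qed

lemma card_less_if_Diff_subset:
  assumes B: "finite B" and sub: "A - {b} \<subseteq> B - {x, a}" and x: "x \<in> B" and "a \<noteq> x"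
    and "b \<in> A \<Longrightarrow> a \<in> B"
  shows "card A < card B"
proof -
  have "A \<subseteq> insert b B" using sub by blast
  then have A: "finite A" using B finite_subset by blast
  have "card A \<le> card (A - {b}) + (if b \<in> A then 1 else 0)"
    by (simp add: card_Diff_singleton A; arith)
  moreover have "card (A - {b}) \<le> card (B - {x, a})"
    using B sub by (simp add: card_mono)
  moreover have "card (B - {x, a}) + (if a \<in> B then 1 else 0) \<le> card (B - {x})"
  proof (cases "a \<in> B")
    case True
    have "B - {x, a} = B - {x} - {a}" by auto
    moreover have "card (B - {x} - {a}) < card (B - {x})"
      using True \<open>a \<noteq> x\<close> B by (intro card_Diff1_less) auto
    ultimately show ?thesis using True by simp
  next
    case False
    then show ?thesis using B by (simp add: card_mono Diff_mono)
  qed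
  moreover have "card (B - {x}) < card B"
    by (rule card_Diff1_less[OF B x])
  ultimately show ?thesis
    using assms(5) by (simp split: if_splits)
qed

lemma deg_less_if_nested:
  assumes G: "is_graph d G" and nested: "nested_nbhds G"
    and x: "x \<in> verts G" and y: "y \<in> verts G" "x \<noteq> y" "(x, y) \<notin> arcs G"
    and y0: "y0 \<in> nbhd G x"
  shows "deg G y < deg G y0"
proof -
  have fin: "finite (nbhd G u)" for u
    using G by (simp add: is_graph_def nbhd_def)
  have "sym (arcs G)" using nested by (simp add: nested_nbhds_def)
  then have nbhd_sym: "u \<in> nbhd G w \<longleftrightarrow> w \<in> nbhd G u" for u w
    using G unfolding nbhd_def is_graph_def sym_def by blast
  have y_loopless: "y \<notin> nbhd G y"
    using G by (simp add: is_graph_def nbhd_def)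
  have x_y0: "x \<in> nbhd G y0" and x_y: "x \<notin> nbhd G y"
    using y0 y(3) nbhd_sym[of x y0] nbhd_sym[of x y] by (auto simp: nbhd_def)
  have "y0 \<in> verts G" using y0 by (simp add: nbhd_def)
  then have "nbhd G y0 - {y} \<subseteq> nbhd G y \<or> nbhd G y - {y0} \<subseteq> nbhd G y0"
    using nested y(1) by (simp add: nested_nbhds_def)
  then have "nbhd G y - {y0} \<subseteq> nbhd G y0"
    using x_y0 x_y y(2) by blast
  then have "nbhd G y - {y0} \<subseteq> nbhd G y0 - {x, y}"
    using x_y y_loopless by blast
  then show ?thesis
    unfolding deg_def using y(2) nbhd_sym[of y0 y]
    by (intro card_less_if_Diff_subset[OF fin _ x_y0]) auto
qed

lemma degree_threshold_if_nested:
  assumes G: "is_graph d G" and nested: "nested_nbhds G" and x: "x \<in> verts G"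
  shows "\<exists>k. degree_threshold G x k"
proof -
  have fin: "finite (nbhd G x)"
    using G by (simp add: is_graph_def nbhd_def)
  define k where "k = (if nbhd G x = {} then Suc (card (verts G)) else Min (deg G ` nbhd G x))"
  have "(x, y) \<in> arcs G \<longleftrightarrow> k \<le> deg G y" if y: "y \<in> verts G" "x \<noteq> y" for y
  proof
    assume "(x, y) \<in> arcs G"
    then show "k \<le> deg G y" using y fin by (auto simp: k_def nbhd_def)
  next
    assume k: "k \<le> deg G y"
    show "(x, y) \<in> arcs G"
    proof (rule ccontr)
      assume xy: "(x, y) \<notin> arcs G"
      have "deg G y \<le> card (verts G)"
        using G by (auto simp: deg_def nbhd_def is_graph_def intro: card_mono)
      then have "nbhd G x \<noteq> {}" using k by (auto simp: k_def)
      then have "k \<in> deg G ` nbhd G x"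
        using fin by (simp add: k_def)
      then obtain y0 where y0: "y0 \<in> nbhd G x" and k_y0: "k = deg G y0"
        by blast
      have "deg G y < deg G y0"
        by (rule deg_less_if_nested[OF G nested x y xy y0])
      with k k_y0 show False by simp
    qed
  qed
  then show ?thesis unfolding degree_threshold_def by blast
qed

lemma nested_iff_degree_thresholds:
  "is_graph d G \<Longrightarrow> nested_nbhds G \<longleftrightarrow> sym (arcs G) \<and> (\<forall>x\<in>verts G. \<exists>k. degree_threshold G x k)"
  using nested_if_degree_thresholds degree_threshold_if_nested nested_nbhds_def by blast

definition IAll :: "var2 \<Rightarrow> ic2 \<Rightarrow> ic2" where "IAll z \<phi> = INeg (IExc 1 z (INeg \<phi>))"
definition IImp :: "ic2 \<Rightarrow> ic2 \<Rightarrow> ic2" where "IImp \<phi> \<psi> = INeg (IAnd \<phi> (INeg \<psi>))"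
definition IIff :: "ic2 \<Rightarrow> ic2 \<Rightarrow> ic2" where "IIff \<phi> \<psi> = IAnd (IImp \<phi> \<psi>) (IImp \<psi> \<phi>)"

lemma ic2_sat_IAll:
  "finite (verts G) \<Longrightarrow> ic2_sat G a (IAll z \<phi>) \<longleftrightarrow> (\<forall>w\<in>verts G. ic2_sat G (a(z := w)) \<phi>)"
  by (auto simp: IAll_def Suc_le_eq card_gt_0_iff)

lemma ic2_sat_IImp [simp]: "ic2_sat G a (IImp \<phi> \<psi>) \<longleftrightarrow> (ic2_sat G a \<phi> \<longrightarrow> ic2_sat G a \<psi>)"
  and ic2_sat_IIff [simp]: "ic2_sat G a (IIff \<phi> \<psi>) \<longleftrightarrow> (ic2_sat G a \<phi> \<longleftrightarrow> ic2_sat G a \<psi>)"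
  by (auto simp: IImp_def IIff_def)

lemma ic2_fv_IAll [simp]: "ic2_fv (IAll z \<phi>) = ic2_fv \<phi> - {z}"
  and ic2_fv_IImp [simp]: "ic2_fv (IImp \<phi> \<psi>) = ic2_fv \<phi> \<union> ic2_fv \<psi>"
  and ic2_fv_IIff [simp]: "ic2_fv (IIff \<phi> \<psi>) = ic2_fv \<phi> \<union> ic2_fv \<psi>"
  by (auto simp: IAll_def IImp_def IIff_def)

definition ic2_degree_threshold :: "nat \<Rightarrow> ic2" where
  "ic2_degree_threshold k =
     IAll VY (IImp (INeg (IEq VX VY)) (IIff (IEdge VX VY) (IExc k VX (IEdge VY VX))))"

definition ic2_nested :: ic2 where
  "ic2_nested = IAll VX (IAnd (IAll VY (IImp (IEdge VX VY) (IEdge VY VX))) (IBigOr ic2_degree_threshold))"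

lemma ic2_fv_ic2_nested: "ic2_fv ic2_nested = {}"
  by (auto simp: ic2_nested_def ic2_degree_threshold_def)

lemma ic2_sat_ic2_nested:
  assumes G: "is_graph d G"
  shows "ic2_sat G a ic2_nested \<longleftrightarrow> nested_nbhds G"
proof -
  have "finite (verts G)" using G by (simp add: is_graph_def)
  then have "ic2_sat G a ic2_nested \<longleftrightarrow>
      (\<forall>x\<in>verts G. (\<forall>y\<in>verts G. (x, y) \<in> arcs G \<longrightarrow> (y, x) \<in> arcs G) \<and> (\<exists>k. degree_threshold G x k))"
    by (simp add: ic2_nested_def ic2_degree_threshold_def ic2_sat_IAll degree_threshold_def
        deg_def nbhd_def)
  also have "\<dots> \<longleftrightarrow> sym (arcs G) \<and> (\<forall>x\<in>verts G. \<exists>k. degree_threshold G x k)"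
    by (simp add: sym_arcs_iff[OF G] ball_conj_distrib)
  also have "\<dots> \<longleftrightarrow> nested_nbhds G"
    by (simp add: nested_iff_degree_thresholds[OF G])
  finally show ?thesis .
qed

lemma ic2_expressible_nested_nbhds:
  assumes "\<And>G. C G \<Longrightarrow> is_graph d G"
  shows "ic2_expressible C (\<lambda>G v. nested_nbhds G)"
  unfolding ic2_expressible_def using assms ic2_fv_ic2_nested ic2_sat_ic2_nested by blast

lemma nested_nbhds_if_weight_threshold:
  fixes f :: "nat \<Rightarrow> int"
  assumes adj: "\<And>u w. (u, w) \<in> arcs G \<longleftrightarrow> u \<in> verts G \<and> w \<in> verts G \<and> u \<noteq> w \<and> 0 < f u + f w"
  shows "nested_nbhds G"
proof -
  have "nbhd G u - {w} \<subseteq> nbhd G w" if "f u \<le> f w" "w \<in> verts G" for u w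
    using that by (auto simp: nbhd_def adj)
  then show ?thesis
    unfolding nested_nbhds_def sym_def by (metis adj add.commute linorder_linear)
qed

section \<open>Twin graphs\<close>

definition width :: "nat \<Rightarrow> nat" where
  "width R = 4 * R + 8"

definition cut_pos :: "nat \<Rightarrow> nat" where
  "cut_pos R = 2 * R + 2"

definition pos_adj :: "nat \<Rightarrow> nat \<Rightarrow> bool" where
  "pos_adj p q \<longleftrightarrow> even (min p q)"

definition is_cut_pair :: "nat \<Rightarrow> nat \<Rightarrow> nat \<Rightarrow> bool" where
  "is_cut_pair R p q \<longleftrightarrow> (p = cut_pos R \<and> q = cut_pos R + 3) \<or> (q = cut_pos R \<and> p = cut_pos R + 3)"

definition pos_adj_cut :: "nat \<Rightarrow> bool \<Rightarrow> nat \<Rightarrow> nat \<Rightarrow> bool" where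
  "pos_adj_cut R cutting p q \<longleftrightarrow> pos_adj p q \<and> \<not> (cutting \<and> is_cut_pair R p q)"

definition vert_adj :: "nat \<Rightarrow> bool \<Rightarrow> nat \<Rightarrow> nat \<Rightarrow> bool" where
  "vert_adj R cutting u w \<longleftrightarrow> u \<noteq> w \<and> pos_adj_cut R cutting (u mod width R) (w mod width R)"

text \<open>Vertex \<open>u\<close> sits at position \<open>u mod width R\<close>, so each position carries \<open>N\<close> twins.\<close>

definition twin_graph :: "nat \<Rightarrow> nat \<Rightarrow> nat \<Rightarrow> bool \<Rightarrow> graph" where
  "twin_graph d R N cutting =
     \<lparr>verts = {..<width R * N},
      arcs = {(u, w). u < width R * N \<and> w < width R * N \<and> vert_adj R cutting u w},
      lab = (\<lambda>_. replicate d False)\<rparr>"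

lemma width_pos: "0 < width R"
  by (simp add: width_def)

lemma pos_adj_sym: "pos_adj p q = pos_adj q p"
  by (simp add: pos_adj_def min.commute)

lemma pos_adj_cut_sym: "pos_adj_cut R c p q = pos_adj_cut R c q p"
  by (auto simp: pos_adj_cut_def is_cut_pair_def pos_adj_sym)

lemma vert_adj_irrefl [simp]: "\<not> vert_adj R c u u"
  by (simp add: vert_adj_def)

lemma vert_adj_sym: "vert_adj R c u w = vert_adj R c w u"
  by (auto simp: vert_adj_def pos_adj_cut_sym)

lemma twin_graph_verts [simp]: "verts (twin_graph d R N c) = {..<width R * N}"
  by (simp add: twin_graph_def)

lemma twin_graph_arcs:
  "(u, w) \<in> arcs (twin_graph d R N c) \<longleftrightarrow> u < width R * N \<and> w < width R * N \<and> vert_adj R c u w"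
  by (simp add: twin_graph_def)

lemma twin_graph_hasP [simp]: "\<not> hasP (twin_graph d R N c) i v"
  by (simp add: twin_graph_def hasP_def)

lemma is_graph_twin_graph: "is_graph d (twin_graph d R N c)"
  by (auto simp: is_graph_def twin_graph_def vert_adj_def)

lemma sym_twin_graph: "sym (arcs (twin_graph d R N c))"
  unfolding sym_def by (auto simp: twin_graph_arcs vert_adj_sym)

definition pos_weight :: "nat \<Rightarrow> nat \<Rightarrow> int" where
  "pos_weight L p = (if even p then int L - int p else int p - int L)"

lemma pos_adj_iff_weight:
  "p < L \<Longrightarrow> q < L \<Longrightarrow> pos_adj p q \<longleftrightarrow> 0 < pos_weight L p + pos_weight L q"
  by (auto simp: pos_adj_def pos_weight_def min_def; presburger)

lemma nested_nbhds_twin_graph: "nested_nbhds (twin_graph d R N False)"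
proof (rule nested_nbhds_if_weight_threshold)
  fix u w
  show "(u, w) \<in> arcs (twin_graph d R N False) \<longleftrightarrow>
      u \<in> verts (twin_graph d R N False) \<and> w \<in> verts (twin_graph d R N False) \<and> u \<noteq> w \<and>
      0 < pos_weight (width R) (u mod width R) + pos_weight (width R) (w mod width R)"
    using pos_adj_iff_weight[of "u mod width R" "width R" "w mod width R"] width_pos[of R]
    by (auto simp: twin_graph_arcs vert_adj_def pos_adj_cut_def)
qed

lemma twin_graph_arcs_pos:
  assumes "p < width R" "q < width R" "1 \<le> N"
  shows "(p, q) \<in> arcs (twin_graph d R N c) \<longleftrightarrow> p \<noteq> q \<and> pos_adj_cut R c p q"
proof -
  have "width R \<le> width R * N" using assms(3) by simp
  then have "p < width R * N" "q < width R * N"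
    using assms(1,2) by linarith+
  then show ?thesis
    using assms by (auto simp: twin_graph_arcs vert_adj_def)
qed

lemma not_nested_nbhds_twin_graph:
  assumes "1 \<le> N"
  shows "\<not> nested_nbhds (twin_graph d R N True)"
proof
  let ?G = "twin_graph d R N True"
  define p where "p i = cut_pos R + i" for i :: nat
  assume nested: "nested_nbhds ?G"
  have pos: "p i < width R" if "i \<le> 3" for i
    using that by (simp add: p_def cut_pos_def width_def)
  have "width R \<le> width R * N" using assms by simp
  then have "p i \<in> verts ?G" if "i \<le> 3" for i
    using less_le_trans[OF pos[OF that]] by simp
  then have in_G: "p 0 \<in> verts ?G" "p 1 \<in> verts ?G" "p 2 \<in> verts ?G" "p 3 \<in> verts ?G"
    by simp_all
  have arc_iff: "(p i, p j) \<in> arcs ?G \<longleftrightarrow> i \<noteq> j \<and> pos_adj_cut R True (p i) (p j)"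
    if "i \<le> 3" "j \<le> 3" for i j
    using twin_graph_arcs_pos[OF pos[OF that(1)] pos[OF that(2)] assms] by (simp add: p_def)
  have "(p 1, p 0) \<in> arcs ?G" "(p 3, p 0) \<notin> arcs ?G" "(p 3, p 2) \<in> arcs ?G" "(p 1, p 2) \<notin> arcs ?G"
    by (simp_all only: arc_iff) (simp_all add: p_def pos_adj_cut_def pos_adj_def is_cut_pair_def cut_pos_def)
  moreover have "p 0 \<noteq> p 3" "p 2 \<noteq> p 1"
    by (simp_all add: p_def)
  ultimately have "\<not> nbhd ?G (p 1) - {p 3} \<subseteq> nbhd ?G (p 3)"
    "\<not> nbhd ?G (p 3) - {p 1} \<subseteq> nbhd ?G (p 1)"
    using in_G unfolding nbhd_def by blast+
  then show False
    using nested in_G unfolding nested_nbhds_def by blast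
qed

section \<open>The counting game on twin graphs\<close>

definition far :: "nat \<Rightarrow> nat \<Rightarrow> nat \<Rightarrow> bool" where
  "far R r p \<longleftrightarrow> 2 * r \<le> p \<and> 2 * r \<le> width R - 1 - p"

text \<open>What a formula of quantifier rank \<open>r\<close> can see of a position besides its parity:
  its distances to both ends of \<open>{0..<width R}\<close>, truncated at \<open>2 * r\<close>.\<close>

definition ends :: "nat \<Rightarrow> nat \<Rightarrow> nat \<Rightarrow> nat \<times> nat" where
  "ends R r p = (min p (2 * r), min (width R - 1 - p) (2 * r))"

lemma ends_eq_if_far: "far R r p \<Longrightarrow> far R r q \<Longrightarrow> ends R r p = ends R r q"
  by (simp add: far_def ends_def)

lemma ends_Suc_imp_ends: "ends R (Suc r) p = ends R (Suc r) q \<Longrightarrow> ends R r p = ends R r q"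
  by (simp add: ends_def min_def split: if_splits)

lemma ends_Suc_eq_cases:
  assumes "ends R (Suc r) x = ends R (Suc r) x'" "x < width R" "x' < width R"
  obtains "\<not> far R (Suc r) x" "x' = x" | "far R (Suc r) x" "far R (Suc r) x'"
proof -
  have m1: "min x (2 * Suc r) = min x' (2 * Suc r)"
    and m2: "min (width R - 1 - x) (2 * Suc r) = min (width R - 1 - x') (2 * Suc r)"
    using assms(1) by (simp_all add: ends_def)
  show thesis
  proof (cases "far R (Suc r) x")
    case True
    then have "far R (Suc r) x'"
      using m1 m2 unfolding far_def by linarith
    with True show thesis using that by blast
  next
    case False
    then have "x' = x"
      using m1 m2 assms(2,3) unfolding far_def by linarith
    with False show thesis using that by blast
  qed
qed

lemma pos_adj_cut_if_not_far:
  assumes "\<not> far R r q" "r \<le> Suc R"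
  shows "pos_adj_cut R c p q \<longleftrightarrow> pos_adj p q"
proof -
  have "q \<noteq> cut_pos R" "q \<noteq> cut_pos R + 3"
    using assms by (auto simp: far_def cut_pos_def width_def)
  then show ?thesis by (auto simp: pos_adj_cut_def is_cut_pair_def)
qed

lemma pos_adj_cut_cases: "pos_adj_cut R c p q = even p \<or> pos_adj_cut R c p q = even q"
proof (cases "c \<and> is_cut_pair R p q")
  case True
  then have "odd p \<or> odd q"
    by (auto simp: is_cut_pair_def cut_pos_def)
  then show ?thesis using True by (auto simp: pos_adj_cut_def)
next
  case False
  then show ?thesis by (auto simp: pos_adj_cut_def pos_adj_def min_def)
qed

text \<open>Far from the ends, a position below \<open>x'\<close> is adjacent to \<open>x'\<close> iff it is even,
  and one above \<open>x'\<close> iff \<open>x'\<close> is even, so both possible adjacencies can be realised.\<close>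

lemma pos_forth_far:
  assumes x': "far R (Suc r) x'" and r: "Suc r \<le> R" and t: "t = e \<or> t = even x'"
  obtains y' where "y' < width R" "even y' \<longleftrightarrow> e" "far R r y'" "pos_adj_cut R c y' x' \<longleftrightarrow> t"
proof -
  define lo where "lo = 2 * r + (if e then 0 else 1)"
  define hi where "hi = width R - 1 - 2 * r - (if e then 1 else 0)"
  have bounds: "lo < x'" "x' < hi" "lo < cut_pos R" "cut_pos R + 3 < hi" "hi < width R"
    using x' r by (auto simp: lo_def hi_def far_def width_def cut_pos_def)
  then have "\<not> is_cut_pair R lo x'" "\<not> is_cut_pair R hi x'"
    by (auto simp: is_cut_pair_def)
  then have adj: "pos_adj_cut R c lo x' \<longleftrightarrow> even lo" "pos_adj_cut R c hi x' \<longleftrightarrow> even x'"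
    using bounds by (simp_all add: pos_adj_cut_def pos_adj_def min_def)
  have "hi = 2 * (2 * R + 3 - r) + (if e then 0 else 1)"
    using r by (simp add: hi_def width_def; arith)
  then have par: "even lo \<longleftrightarrow> e" "even hi \<longleftrightarrow> e"
    by (simp_all add: lo_def)
  have "far R r lo" "far R r hi"
    using r by (auto simp: lo_def hi_def far_def width_def)
  then show thesis
    using that bounds adj par t by (metis order.strict_trans)
qed

lemma pos_forth:
  assumes x: "x < width R" "x' < width R" and par: "even x \<longleftrightarrow> even x'"
    and ends: "ends R (Suc r) x = ends R (Suc r) x'" and y: "y < width R" and r: "Suc r \<le> R"
  shows "\<exists>y'<width R. (even y' \<longleftrightarrow> even y) \<and> ends R r y' = ends R r y
    \<and> (pos_adj_cut R c2 y' x' \<longleftrightarrow> pos_adj_cut R c1 y x)"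
  using ends x
proof (cases rule: ends_Suc_eq_cases)
  case 1
  then show ?thesis
    using y r pos_adj_cut_if_not_far[of R "Suc r" x] by auto
next
  case far_x: 2
  show ?thesis
  proof (cases "far R r y")
    case True
    obtain y' where "y' < width R" "even y' \<longleftrightarrow> even y" "far R r y'"
      "pos_adj_cut R c2 y' x' \<longleftrightarrow> pos_adj_cut R c1 y x"
      using pos_forth_far[OF far_x(2) r] pos_adj_cut_cases[of R c1 y x] par by metis
    then show ?thesis using True ends_eq_if_far by blast
  next
    case False
    then have "pos_adj y x \<longleftrightarrow> pos_adj y x'"
      using far_x par x y by (auto simp: far_def pos_adj_def min_def)
    moreover have "pos_adj_cut R c y q \<longleftrightarrow> pos_adj y q" for c q
      using pos_adj_cut_if_not_far[OF False, of c q] r pos_adj_cut_sym[of R c y q] pos_adj_sym[of y q]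
      by simp
    ultimately show ?thesis
      using y by (intro exI[of _ y]) simp
  qed
qed

definition vert_equiv :: "nat \<Rightarrow> nat \<Rightarrow> nat \<Rightarrow> nat \<Rightarrow> nat \<Rightarrow> bool" where
  "vert_equiv R N r u v \<longleftrightarrow> u < width R * N \<and> v < width R * N
     \<and> (even (u mod width R) \<longleftrightarrow> even (v mod width R)) \<and> ends R r (u mod width R) = ends R r (v mod width R)"

text \<open>The invariant of the two-pebble counting game with \<open>r\<close> rounds left, for pebbles on
  \<open>u1, u2\<close> in one twin graph and on \<open>v1, v2\<close> in the other.\<close>

definition pair_equiv :: "nat \<Rightarrow> nat \<Rightarrow> bool \<Rightarrow> bool \<Rightarrow> nat \<Rightarrow> nat \<Rightarrow> nat \<Rightarrow> nat \<Rightarrow> nat \<Rightarrow> bool" where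
  "pair_equiv R N c1 c2 r u1 u2 v1 v2 \<longleftrightarrow> vert_equiv R N r u1 v1 \<and> vert_equiv R N r u2 v2
     \<and> (u1 = u2 \<longleftrightarrow> v1 = v2) \<and> (vert_adj R c1 u1 u2 \<longleftrightarrow> vert_adj R c2 v1 v2)"

lemma vert_equiv_sym: "vert_equiv R N r u v \<Longrightarrow> vert_equiv R N r v u"
  by (auto simp: vert_equiv_def)

lemma vert_equiv_Suc_imp: "vert_equiv R N (Suc r) u v \<Longrightarrow> vert_equiv R N r u v"
  unfolding vert_equiv_def using ends_Suc_imp_ends by blast

lemma pair_equiv_swap: "pair_equiv R N c1 c2 r u1 u2 v1 v2 \<Longrightarrow> pair_equiv R N c2 c1 r v1 v2 u1 u2"
  by (auto simp: pair_equiv_def vert_equiv_sym)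

lemma pair_equiv_flip: "pair_equiv R N c1 c2 r u1 u2 v1 v2 \<longleftrightarrow> pair_equiv R N c1 c2 r u2 u1 v2 v1"
  by (auto simp: pair_equiv_def vert_adj_sym)

lemma pair_equiv_move:
  assumes "pair_equiv R N c1 c2 r w u w' u'" "w2 < width R * N" "w2 mod width R = w' mod width R"
    "w2 \<noteq> u'" "w' \<noteq> u'"
  shows "pair_equiv R N c1 c2 r w u w2 u'"
  using assms by (auto simp: pair_equiv_def vert_equiv_def vert_adj_def)

lemma block_other:
  fixes p L N u :: nat
  assumes "p < L" "2 \<le> N"
  obtains w where "w < L * N" "w mod L = p" "w \<noteq> u"
proof -
  have "L * 2 \<le> L * N" using assms(2) by simp
  then have "p + L < L * N" "p < L * N" using assms(1) by linarith+
  moreover have "p mod L = p" "(p + L) mod L = p" "p + L \<noteq> p"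
    using assms(1) by simp_all
  ultimately show thesis
    using that[of p] that[of "p + L"] by (cases "p = u") simp_all
qed

lemma vert_forth:
  assumes uu': "vert_equiv R N (Suc r) u u'" and w: "w < width R * N" and r: "Suc r \<le> R"
    and N: "2 \<le> N"
  shows "\<exists>w'. pair_equiv R N c1 c2 r w u w' u'"
proof (cases "w = u")
  case True
  then show ?thesis
    using vert_equiv_Suc_imp[OF uu'] by (auto simp: pair_equiv_def vert_adj_def)
next
  case False
  let ?L = "width R"
  obtain y' where y': "y' < ?L" "even y' \<longleftrightarrow> even (w mod ?L)" "ends R r y' = ends R r (w mod ?L)"
    "pos_adj_cut R c2 y' (u' mod ?L) \<longleftrightarrow> pos_adj_cut R c1 (w mod ?L) (u mod ?L)"
    using pos_forth[of "u mod ?L" R "u' mod ?L" r "w mod ?L" c2 c1] uu' r width_pos[of R]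
    by (auto simp: vert_equiv_def)
  obtain w' where w': "w' < ?L * N" "w' mod ?L = y'" "w' \<noteq> u'"
    using block_other[OF y'(1) N] by blast
  have "pair_equiv R N c1 c2 r w u w' u'"
    using vert_equiv_Suc_imp[OF uu'] False w y' w' by (auto simp: pair_equiv_def vert_equiv_def vert_adj_def)
  then show ?thesis by blast
qed

lemma card_block:
  assumes "p < L"
  shows "card {w. w < L * N \<and> w mod L = p} = N"
proof -
  have "{w. w < L * N \<and> w mod L = p} = (\<lambda>i. p + L * i) ` {..<N}"
  proof (intro set_eqI iffI)
    fix w assume w: "w \<in> {w. w < L * N \<and> w mod L = p}"
    then have "w = p + L * (w div L)"
      using mod_mult_div_eq[of w L] by simp
    moreover have "w div L < N"
      using w less_mult_imp_div_less[of w N L] by (simp add: mult.commute)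
    ultimately show "w \<in> (\<lambda>i. p + L * i) ` {..<N}" by blast
  next
    fix w assume "w \<in> (\<lambda>i. p + L * i) ` {..<N}"
    then obtain i where "i < N" "w = p + L * i" by blast
    moreover have "p + L * i < L * Suc i" using assms by simp
    moreover have "L * Suc i \<le> L * N" using \<open>i < N\<close> by (intro mult_le_mono2) simp
    ultimately show "w \<in> {w. w < L * N \<and> w mod L = p}" using assms by simp
  qed
  moreover have "inj_on (\<lambda>i. p + L * i) {..<N}"
    using assms by (auto simp: inj_on_def)
  ultimately show ?thesis by (simp add: card_image)
qed

lemma card_ge_cases: "k \<le> card S \<Longrightarrow> k = 0 \<or> (k = 1 \<and> S \<noteq> {}) \<or> (\<exists>w\<in>S. w \<noteq> u)"
proof (rule ccontr)
  assume "k \<le> card S" "\<not> (k = 0 \<or> (k = 1 \<and> S \<noteq> {}) \<or> (\<exists>w\<in>S. w \<noteq> u))"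
  moreover from this have "card S \<le> 1"
    using card_mono[of "{u}" S] by auto
  ultimately show False by (cases "S = {}") auto
qed

lemma card_ge_if_block_closed:
  assumes "0 < L" and S: "S \<subseteq> {..<L * N}" and "k < N"
    and closed: "\<And>w w2. w \<in> S \<Longrightarrow> w \<noteq> u \<Longrightarrow> w2 < L * N \<Longrightarrow> w2 mod L = w mod L \<Longrightarrow> w2 \<noteq> u \<Longrightarrow> w2 \<in> S"
    and "k = 0 \<or> (k = 1 \<and> S \<noteq> {}) \<or> (\<exists>w\<in>S. w \<noteq> u)"
  shows "k \<le> card S"
proof -
  have fin: "finite S" using S finite_subset by blast
  consider "k = 0" | "k = 1" "S \<noteq> {}" | w where "w \<in> S" "w \<noteq> u"
    using assms(5) by blast
  then show ?thesis
  proof cases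
    case 2
    then show ?thesis using fin by (simp add: Suc_le_eq card_gt_0_iff)
  next
    case 3
    define B where "B = {w2. w2 < L * N \<and> w2 mod L = w mod L}"
    have "card B = N" unfolding B_def by (rule card_block) (simp add: assms(1))
    moreover have "B - {u} \<subseteq> S" using closed[OF 3] by (auto simp: B_def)
    then have "card (B - {u}) \<le> card S" using fin by (rule card_mono[rotated])
    moreover have "card B - 1 \<le> card (B - {u})"
      using diff_card_le_card_Diff[of "{u}" B] by simp
    ultimately show ?thesis using \<open>k < N\<close> by linarith
  qed simp
qed

lemma card_le_transfer:
  assumes uu': "vert_equiv R N (Suc r) u u'" and r: "Suc r \<le> R" and N: "2 \<le> N" "k < N"
    and S1: "S1 \<subseteq> {..<width R * N}" and S2: "S2 \<subseteq> {..<width R * N}"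
    and transfer: "\<And>w w'. pair_equiv R N c1 c2 r w u w' u' \<Longrightarrow> w \<in> S1 \<longleftrightarrow> w' \<in> S2"
    and k: "k \<le> card S1"
  shows "k \<le> card S2"
proof -
  have closed: "w2 \<in> S2"
    if w': "w' \<in> S2" "w' \<noteq> u'" "w2 < width R * N" "w2 mod width R = w' mod width R" "w2 \<noteq> u'"
    for w' w2
  proof -
    obtain w where "pair_equiv R N c2 c1 r w' u' w u"
      using vert_forth[OF vert_equiv_sym[OF uu'] _ r N(1)] S2 w'(1) by blast
    then have "pair_equiv R N c1 c2 r w u w' u'"
      by (rule pair_equiv_swap)
    then show ?thesis
      using pair_equiv_move[of R N c1 c2 r w u w' u' w2] transfer w' by blast
  qed
  have "\<exists>w'\<in>S2. w' = u' \<longleftrightarrow> w = u" if w: "w \<in> S1" for w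
  proof -
    obtain w' where "pair_equiv R N c1 c2 r w u w' u'"
      using vert_forth[OF uu' _ r N(1)] S1 w by blast
    then show ?thesis
      using transfer w unfolding pair_equiv_def by blast
  qed
  then have "k = 0 \<or> (k = 1 \<and> S2 \<noteq> {}) \<or> (\<exists>w'\<in>S2. w' \<noteq> u')"
    using card_ge_cases[OF k, of u] by blast
  from card_ge_if_block_closed[OF width_pos S2 N(2) closed this] show ?thesis .
qed

lemma card_le_transfer_iff:
  assumes "vert_equiv R N (Suc r) u u'" "Suc r \<le> R" "2 \<le> N" "k < N"
    and "S1 \<subseteq> {..<width R * N}" "S2 \<subseteq> {..<width R * N}"
    and transfer: "\<And>w w'. pair_equiv R N c1 c2 r w u w' u' \<Longrightarrow> w \<in> S1 \<longleftrightarrow> w' \<in> S2"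
  shows "k \<le> card S1 \<longleftrightarrow> k \<le> card S2"
proof
  show "k \<le> card S1 \<Longrightarrow> k \<le> card S2"
    by (rule card_le_transfer[OF assms])
next
  have "w' \<in> S2 \<longleftrightarrow> w \<in> S1" if "pair_equiv R N c2 c1 r w' u' w u" for w' w
    using transfer[OF pair_equiv_swap[OF that]] by blast
  from card_le_transfer[OF vert_equiv_sym[OF assms(1)] assms(2-4) assms(6,5) this]
  show "k \<le> card S2 \<Longrightarrow> k \<le> card S1" .
qed

primrec c2_qrank :: "c2 \<Rightarrow> nat" where
  "c2_qrank (CEq z w) = 0"
| "c2_qrank (CEdge z w) = 0"
| "c2_qrank (CPred k z) = 0"
| "c2_qrank (CNeg \<phi>) = c2_qrank \<phi>"
| "c2_qrank (CAnd \<phi> \<psi>) = max (c2_qrank \<phi>) (c2_qrank \<psi>)"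
| "c2_qrank (CExc k z \<phi>) = Suc (c2_qrank \<phi>)"

primrec c2_max_count :: "c2 \<Rightarrow> nat" where
  "c2_max_count (CEq z w) = 0"
| "c2_max_count (CEdge z w) = 0"
| "c2_max_count (CPred k z) = 0"
| "c2_max_count (CNeg \<phi>) = c2_max_count \<phi>"
| "c2_max_count (CAnd \<phi> \<psi>) = max (c2_max_count \<phi>) (c2_max_count \<psi>)"
| "c2_max_count (CExc k z \<phi>) = max k (c2_max_count \<phi>)"

fun other_var :: "var2 \<Rightarrow> var2" where
  "other_var VX = VY"
| "other_var VY = VX"

lemma pair_equiv_upd:
  "pair_equiv R N c1 c2 r ((a(z := w)) VX) ((a(z := w)) VY) ((b(z := w')) VX) ((b(z := w')) VY)
   \<longleftrightarrow> pair_equiv R N c1 c2 r w (a (other_var z)) w' (b (other_var z))"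
  by (cases z) (simp_all add: pair_equiv_flip[of R N c1 c2 r w])

lemma pair_equiv_other:
  "pair_equiv R N c1 c2 r (a VX) (a VY) (b VX) (b VY) \<Longrightarrow> vert_equiv R N r (a (other_var z)) (b (other_var z))"
  by (cases z) (simp_all add: pair_equiv_def)

lemma pair_equiv_atoms:
  assumes "pair_equiv R N c1 c2 r (a VX) (a VY) (b VX) (b VY)"
  shows "a z = a w \<longleftrightarrow> b z = b w"
    and "(a z, a w) \<in> arcs (twin_graph d R N c1) \<longleftrightarrow> (b z, b w) \<in> arcs (twin_graph d R N c2)"
proof -
  have eq: "a VX = a VY \<longleftrightarrow> b VX = b VY"
    and adj: "vert_adj R c1 (a VX) (a VY) \<longleftrightarrow> vert_adj R c2 (b VX) (b VY)"
    and bounds: "a v < width R * N" "b v < width R * N" for v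
    using assms by (auto simp: pair_equiv_def vert_equiv_def intro: var2.exhaust[of v])
  show "a z = a w \<longleftrightarrow> b z = b w"
    using eq by (cases z; cases w) auto
  show "(a z, a w) \<in> arcs (twin_graph d R N c1) \<longleftrightarrow> (b z, b w) \<in> arcs (twin_graph d R N c2)"
    using adj bounds by (cases z; cases w) (simp_all add: twin_graph_arcs vert_adj_sym)
qed

lemma c2_sat_twin_graph_iff:
  assumes N: "2 \<le> N"
  shows "pair_equiv R N c1 c2 r (a VX) (a VY) (b VX) (b VY) \<Longrightarrow> c2_qrank \<phi> \<le> r \<Longrightarrow> r \<le> R
    \<Longrightarrow> c2_max_count \<phi> < N
    \<Longrightarrow> c2_sat (twin_graph d R N c1) a \<phi> \<longleftrightarrow> c2_sat (twin_graph d R N c2) b \<phi>"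
proof (induction \<phi> arbitrary: r a b)
  case (CEq z w)
  then show ?case using pair_equiv_atoms(1) by simp
next
  case (CEdge z w)
  then show ?case using pair_equiv_atoms(2) by simp
next
  case (CExc k z \<psi>)
  obtain r' where r: "r = Suc r'" using CExc.prems(2) by (cases r) auto
  let ?G1 = "twin_graph d R N c1" and ?G2 = "twin_graph d R N c2"
  have "w \<in> {w \<in> verts ?G1. c2_sat ?G1 (a(z := w)) \<psi>} \<longleftrightarrow> w' \<in> {w' \<in> verts ?G2. c2_sat ?G2 (b(z := w')) \<psi>}"
    if "pair_equiv R N c1 c2 r' w (a (other_var z)) w' (b (other_var z))" for w w'
  proof -
    have "w < width R * N" "w' < width R * N"
      using that by (simp_all add: pair_equiv_def vert_equiv_def)
    moreover have "pair_equiv R N c1 c2 r' ((a(z := w)) VX) ((a(z := w)) VY) ((b(z := w')) VX) ((b(z := w')) VY)"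
      using that by (simp only: pair_equiv_upd)
    then have "c2_sat ?G1 (a(z := w)) \<psi> \<longleftrightarrow> c2_sat ?G2 (b(z := w')) \<psi>"
      by (rule CExc.IH) (use CExc.prems r in simp_all)
    ultimately show ?thesis by simp
  qed
  then have "k \<le> card {w \<in> verts ?G1. c2_sat ?G1 (a(z := w)) \<psi>}
      \<longleftrightarrow> k \<le> card {w' \<in> verts ?G2. c2_sat ?G2 (b(z := w')) \<psi>}"
    using pair_equiv_other[OF CExc.prems(1), of z] CExc.prems r N
    by (intro card_le_transfer_iff) auto
  then show ?case by simp
qed auto

lemma not_c2_expressible_nested_nbhds:
  assumes "\<And>R N c. C (twin_graph d R N c)"
  shows "\<not> c2_expressible C (\<lambda>G v. nested_nbhds G)"
proof
  assume "c2_expressible C (\<lambda>G v. nested_nbhds G)"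
  then obtain \<phi> where sem: "\<And>G v. C G \<Longrightarrow> v \<in> verts G \<Longrightarrow> c2_sat G (\<lambda>_. v) \<phi> \<longleftrightarrow> nested_nbhds G"
    unfolding c2_expressible_def by blast
  define R N where "R = c2_qrank \<phi>" and "N = c2_max_count \<phi> + 2"
  have "0 < width R * N" using width_pos[of R] by (simp add: N_def)
  then have "nested_nbhds (twin_graph d R N c) \<longleftrightarrow> c2_sat (twin_graph d R N c) (\<lambda>_. 0) \<phi>" for c
    using sem[OF assms] by simp
  moreover have "c2_sat (twin_graph d R N False) (\<lambda>_. 0) \<phi> \<longleftrightarrow> c2_sat (twin_graph d R N True) (\<lambda>_. 0) \<phi>"
    by (rule c2_sat_twin_graph_iff[where r = R])
      (simp_all add: R_def N_def pair_equiv_def vert_equiv_def width_pos)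
  ultimately have "nested_nbhds (twin_graph d R N False) \<longleftrightarrow> nested_nbhds (twin_graph d R N True)"
    by simp
  moreover have "1 \<le> N" by (simp add: N_def)
  ultimately show False
    using nested_nbhds_twin_graph not_nested_nbhds_twin_graph by blast
qed

lemma c2_expressivity_gap:
  assumes "\<And>G. C G \<Longrightarrow> is_graph d G" and "\<And>R N c. C (twin_graph d R N c)"
  shows "(\<forall>P. c2_expressible C P \<longrightarrow> fo_expressible C P \<and> ic2_expressible C P)
    \<and> (\<exists>P. fo_expressible C P \<and> ic2_expressible C P \<and> \<not> c2_expressible C P)"
proof -
  have "finite (verts G)" if "C G" for G
    using assms(1)[OF that] by (simp add: is_graph_def)
  then show ?thesis
    using c2_expressible_imp_fo_expressible c2_expressible_imp_ic2_expressible
      fo_expressible_nested_nbhds[OF assms(1)] ic2_expressible_nested_nbhds[OF assms(1)]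
      not_c2_expressible_nested_nbhds[of C d, OF assms(2)]
    by blast
qed

theorem theorem7:
  fixes d :: nat
  shows "\<forall>C \<in> {is_graph d, is_ugraph d}.
           (\<forall>P. c2_expressible C P \<longrightarrow> fo_expressible C P \<and> ic2_expressible C P)
         \<and> (\<exists>P. fo_expressible C P \<and> ic2_expressible C P \<and> \<not> c2_expressible C P)"
proof -
  have "is_ugraph d (twin_graph d R N c)" for R N c
    by (simp add: is_ugraph_def is_graph_twin_graph sym_twin_graph)
  then show ?thesis
    using c2_expressivity_gap[of "is_graph d" d] c2_expressivity_gap[of "is_ugraph d" d]
      is_graph_twin_graph by (auto simp: is_ugraph_def)
qed

end
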